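(* Let $T$, $E$ ($\mu$-spanning and $\alpha$-H\"olderian with constant $C(E)$, $\alpha\in(0,1]$), $R$, $(e_k)$ and $\sigma_k$ be as in the context. For every positive integer $n$, $$\sum_{k=1}^{\infty}\sigma_k^4\|T^ne_k\|^2\le\frac{C(E)^2\pi^{2\alpha}}{4n^{2\alpha}}\|E\|_2^2.$$
   Context: $\mathcal{H}$ complex separable infinite-dimensional Hilbert space (inner product linear in second variable), $T$ bounded, $\mathbb{T}$ unit circle, $\mu$ normalized Lebesgue measure. $E:\mathbb{T}\to\mathcal{H}$ bounded, $TE(\lambda)=\lambda E(\lambda)$, $\mu$-spanning ($\{E(\lambda):\lambda\in A\}$ spans a dense subspace whenever $\mu(A)=1$), $\|E(e^{i\theta})-E(e^{i\theta'})\|\le C(E)|\theta-\theta'|^\alpha$; $\|E\|_2^2=\int\|E(\lambda)\|^2d\mu$. $R$ is the positive trace-class operator with $\langle Rx,y\rangle=\int\langle x,E(\lambda)\rangle\overline{\langle y,E(\lambda)\rangle}d\mu(\lambda)$; $(e_k)_{k\ge1}$ is an orthonormal basis of $\mathcal{H}$ of eigenvectors of $R$ with $Re_k=2\sigma_k^2e_k$. *)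

theory Defs
  imports "HOL-Analysis.Analysis"
begin

class complex_vector = real_vector +
  fixes scaleC :: "complex \<Rightarrow> 'a \<Rightarrow> 'a" (infixr "*\<^sub>C" 75)
  assumes scaleC_add_right: "a *\<^sub>C (x + y) = a *\<^sub>C x + a *\<^sub>C y"
    and scaleC_add_left: "(a + b) *\<^sub>C x = a *\<^sub>C x + b *\<^sub>C x"
    and scaleC_scaleC: "a *\<^sub>C (b *\<^sub>C x) = (a * b) *\<^sub>C x"
    and scaleC_one: "1 *\<^sub>C x = x"
    and scaleR_scaleC: "scaleR r x = complex_of_real r *\<^sub>C x"

class complex_inner = complex_vector + real_normed_vector +
  fixes cinner :: "'a \<Rightarrow> 'a \<Rightarrow> complex"
  assumes cinner_commute: "cinner x y = cnj (cinner y x)"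
    and cinner_add_left: "cinner (x + y) z = cinner x z + cinner y z"
    and cinner_scaleC_left: "cinner (a *\<^sub>C x) y = cnj a * cinner x y"
    and cinner_self_real: "Im (cinner x x) = 0"
    and cinner_self_nonneg: "0 \<le> Re (cinner x x)"
    and cinner_self_eq_zero: "cinner x x = 0 \<longleftrightarrow> x = 0"
    and norm_eq_sqrt_cinner: "norm x = sqrt (Re (cinner x x))"

class chilbert_space = complex_inner + complete_space

definition clinear :: "('a::complex_vector \<Rightarrow> 'b::complex_vector) \<Rightarrow> bool" where
  "clinear f \<longleftrightarrow> (\<forall>x y. f (x + y) = f x + f y) \<and> (\<forall>a x. f (a *\<^sub>C x) = a *\<^sub>C f x)"

definition bounded_clinear :: "('a::complex_inner \<Rightarrow> 'b::complex_inner) \<Rightarrow> bool" where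
  "bounded_clinear f \<longleftrightarrow> clinear f \<and> (\<exists>K. \<forall>x. norm (f x) \<le> norm x * K)"

definition cspan :: "'a::complex_vector set \<Rightarrow> 'a set" where
  "cspan S = {\<Sum>v\<in>F. c v *\<^sub>C v | F c. finite F \<and> F \<subseteq> S}"

definition circle_measure :: "complex measure" where
  "circle_measure =
     distr (scale_measure (ennreal (1 / (2 * pi))) (restrict_space lborel {0..<2 * pi})) borel cis"

end

theory Submission
  imports Defs
begin

text \<open>
  Put \<open>F t = E (cis t)\<close> and \<open>h = pi / n\<close>. Where the integrand defining \<open>R\<close> is measurable,
  \<open>R x\<close> is \<open>1 / (2 pi)\<close> times the integral of \<open>\<langle>F t, x\<rangle> F t\<close> over a period, and since
  \<open>T\<^sup>n (F t) = cis (n t) F t\<close>, \<open>T\<^sup>n (R x)\<close> is the same integral with the extra factor \<open>cis (n t)\<close>.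
  Shifting \<open>t\<close> by \<open>h\<close> flips the sign of \<open>cis (n t)\<close>, so averaging the integral with its shift
  rewrites it through the differences \<open>F t - F (t + h)\<close>, whose norms are at most \<open>C(E) h\<^sup>\<alpha>\<close>.
  Cauchy--Schwarz and Bessel's inequality then bound \<open>\<Sum>\<^sub>k \<parallel>T\<^sup>n (R e\<^sub>k)\<parallel>\<^sup>2\<close>, and
  \<open>R e\<^sub>k = 2 \<sigma>\<^sub>k\<^sup>2 e\<^sub>k\<close>.
\<close>

subclass (in chilbert_space) banach ..

section \<open>Complex inner product spaces\<close>

lemma scaleC_zero_left [simp]: "(0::complex) *\<^sub>C (x::'a::complex_vector) = 0"
proof -
  have "(0::complex) *\<^sub>C x = 0 *\<^sub>C x + 0 *\<^sub>C x"
    by (metis add.right_neutral scaleC_add_left)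
  then show ?thesis by simp
qed

lemma scaleC_zero_right [simp]: "(a::complex) *\<^sub>C (0::'a::complex_vector) = 0"
proof -
  have "a *\<^sub>C (0::'a) = a *\<^sub>C 0 + a *\<^sub>C 0"
    by (metis add.right_neutral scaleC_add_right)
  then show ?thesis by simp
qed

lemma scaleC_minus_left: "(- a::complex) *\<^sub>C (x::'a::complex_vector) = - (a *\<^sub>C x)"
proof -
  have "(- a) *\<^sub>C x + a *\<^sub>C x = 0"
    by (simp flip: scaleC_add_left)
  then show ?thesis by (simp add: eq_neg_iff_add_eq_0)
qed

lemma scaleC_minus_right: "(a::complex) *\<^sub>C (- x::'a::complex_vector) = - (a *\<^sub>C x)"
proof -
  have "a *\<^sub>C (- x) + a *\<^sub>C x = 0"
    by (simp flip: scaleC_add_right)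
  then show ?thesis by (simp add: eq_neg_iff_add_eq_0)
qed

lemma scaleC_diff_right: "(a::complex) *\<^sub>C (x - y::'a::complex_vector) = a *\<^sub>C x - a *\<^sub>C y"
  by (simp only: diff_conv_add_uminus scaleC_add_right scaleC_minus_right)

lemma cinner_zero_left [simp]: "cinner 0 (y::'a::complex_inner) = 0"
  using cinner_add_left[of 0 0 y] by simp

lemma cinner_zero_right [simp]: "cinner (x::'a::complex_inner) 0 = 0"
  using cinner_commute[of x 0] by simp

lemma cinner_add_right: "cinner (x::'a::complex_inner) (y + z) = cinner x y + cinner x z"
proof -
  have "cinner x (y+z) = cnj (cinner (y+z) x)" by (rule cinner_commute)
  also have "\<dots> = cnj (cinner y x) + cnj (cinner z x)" by (simp add: cinner_add_left)
  also have "\<dots> = cinner x y + cinner x z" by (simp add: cinner_commute[of x y] cinner_commute[of x z])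
  finally show ?thesis .
qed

lemma cinner_scaleC_right: "cinner (x::'a::complex_inner) (a *\<^sub>C y) = a * cinner x y"
proof -
  have "cinner x (a *\<^sub>C y) = cnj (cinner (a *\<^sub>C y) x)" by (rule cinner_commute)
  also have "\<dots> = a * cnj (cinner y x)" by (simp add: cinner_scaleC_left)
  also have "\<dots> = a * cinner x y" by (simp add: cinner_commute[of x y])
  finally show ?thesis .
qed

lemma cinner_minus_left: "cinner (- x::'a::complex_inner) y = - cinner x y"
proof -
  have "cinner (- x) y + cinner x y = 0"
    by (simp flip: cinner_add_left)
  then show ?thesis by (simp add: eq_neg_iff_add_eq_0)
qed

lemma cinner_minus_right: "cinner (x::'a::complex_inner) (- y) = - cinner x y"
proof -
  have "cinner x (- y) + cinner x y = 0"
    by (simp flip: cinner_add_right)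
  then show ?thesis by (simp add: eq_neg_iff_add_eq_0)
qed

lemma cinner_diff_left: "cinner (x - y::'a::complex_inner) z = cinner x z - cinner y z"
  by (simp only: diff_conv_add_uminus cinner_add_left cinner_minus_left)

lemma cinner_diff_right: "cinner (x::'a::complex_inner) (y - z) = cinner x y - cinner x z"
  by (simp only: diff_conv_add_uminus cinner_add_right cinner_minus_right)

lemma cinner_scaleR_left: "cinner (r *\<^sub>R x::'a::complex_inner) y = of_real r * cinner x y"
  by (simp add: scaleR_scaleC cinner_scaleC_left)

lemma cinner_scaleR_right: "cinner (x::'a::complex_inner) (r *\<^sub>R y) = of_real r * cinner x y"
  by (simp add: scaleR_scaleC cinner_scaleC_right)

lemma cinner_sum_left: "cinner (\<Sum>i\<in>A. f i) (y::'a::complex_inner) = (\<Sum>i\<in>A. cinner (f i) y)"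
  by (induction A rule: infinite_finite_induct) (auto simp: cinner_add_left)

lemma cinner_sum_right: "cinner (x::'a::complex_inner) (\<Sum>i\<in>A. f i) = (\<Sum>i\<in>A. cinner x (f i))"
  by (induction A rule: infinite_finite_induct) (auto simp: cinner_add_right)

lemma cinner_self_eq_norm_sq: "cinner (x::'a::complex_inner) x = complex_of_real ((norm x)\<^sup>2)"
proof -
  have "(norm x)\<^sup>2 = Re (cinner x x)"
    using norm_eq_sqrt_cinner[of x] cinner_self_nonneg[of x] by simp
  then show ?thesis using cinner_self_real[of x] by (simp add: complex_eq_iff)
qed

lemma norm_sq_eq_Re_cinner: "(norm (x::'a::complex_inner))\<^sup>2 = Re (cinner x x)"
  by (simp add: cinner_self_eq_norm_sq)

lemma cinner_eqI: assumes "\<And>y. cinner a y = cinner (b::'a::complex_inner) y" shows "a = b"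
proof -
  have "cinner (a - b) (a - b) = 0" by (simp add: cinner_diff_left assms)
  then show ?thesis by (simp add: cinner_self_eq_zero)
qed

lemma cnj_mult_self: "cnj a * a = complex_of_real ((cmod a)\<^sup>2)"
  using complex_norm_square[of a] by (simp add: mult.commute)

lemma norm_scaleC: "norm (a *\<^sub>C (x::'a::complex_inner)) = cmod a * norm x"
proof -
  have "cinner (a *\<^sub>C x) (a *\<^sub>C x) = (cnj a * a) * cinner x x"
    by (simp add: cinner_scaleC_left cinner_scaleC_right mult.left_commute)
  also have "cnj a * a = complex_of_real ((cmod a)\<^sup>2)"
    by (rule cnj_mult_self)
  finally have eq: "cinner (a *\<^sub>C x) (a *\<^sub>C x) = complex_of_real ((cmod a)\<^sup>2) * cinner x x" .
  have "(norm (a *\<^sub>C x))\<^sup>2 = (cmod a)\<^sup>2 * (norm x)\<^sup>2"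
    unfolding norm_sq_eq_Re_cinner eq by simp
  also have "\<dots> = (cmod a * norm x)\<^sup>2" by (simp add: power_mult_distrib)
  finally show ?thesis
    by (rule power2_eq_imp_eq) simp_all
qed

lemma norm_cinner_le: "cmod (cinner (x::'a::complex_inner) y) \<le> norm x * norm y"
proof (cases "x = 0")
  case True then show ?thesis by simp
next
  case False
  \<comment> \<open>Split \<open>y = z + t x\<close> with \<open>z\<close> orthogonal to \<open>x\<close>; then \<open>\<parallel>y\<parallel> \<ge> |t| \<parallel>x\<parallel>\<close>.\<close>
  define t where "t = cinner x y / cinner x x"
  define z where "z = y - t *\<^sub>C x"
  have xx: "cinner x x \<noteq> 0" using False cinner_self_eq_zero by blast
  have "cinner x z = cinner x y - t * cinner x x"
    unfolding z_def by (simp only: cinner_diff_right cinner_scaleC_right)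
  then have xz: "cinner x z = 0" unfolding t_def using xx by simp
  have zx: "cinner z x = 0" using xz cinner_commute[of z x] by simp
  have y: "z + t *\<^sub>C x = y" by (simp add: z_def)
  have "cinner (z + t *\<^sub>C x) (z + t *\<^sub>C x)
      = cinner z z + t * cinner z x + (cnj t * cinner x z + cnj t * (t * cinner x x))"
    by (simp add: cinner_add_left cinner_add_right cinner_scaleC_left cinner_scaleC_right algebra_simps)
  then have "cinner y y = cinner z z + (cnj t * t) * cinner x x"
    by (simp add: y xz zx mult.assoc)
  also have "cnj t * t = complex_of_real ((cmod t)\<^sup>2)"
    by (rule cnj_mult_self)
  finally have eq: "cinner y y = cinner z z + complex_of_real ((cmod t)\<^sup>2) * cinner x x" .
  have "(norm y)\<^sup>2 = (norm z)\<^sup>2 + (cmod t)\<^sup>2 * (norm x)\<^sup>2"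
    unfolding norm_sq_eq_Re_cinner eq by simp
  then have "(cmod t * norm x)\<^sup>2 \<le> (norm y)\<^sup>2"
    by (simp add: power_mult_distrib)
  then have tx: "cmod t * norm x \<le> norm y"
    by (rule power2_le_imp_le[OF _ norm_ge_zero])
  have "cmod (cinner x y) = cmod t * cmod (cinner x x)"
    using xx by (simp add: t_def norm_divide)
  also have "cmod (cinner x x) = (norm x)\<^sup>2" by (simp add: cinner_self_eq_norm_sq norm_power)
  also have "cmod t * (norm x)\<^sup>2 = (cmod t * norm x) * norm x" by (simp add: power2_eq_square)
  also have "\<dots> \<le> norm y * norm x" using tx by (rule mult_right_mono) simp
  also have "norm y * norm x = norm x * norm y" by (rule mult.commute)
  finally show ?thesis .
qed

lemma bounded_bilinear_cinner: "bounded_bilinear (cinner :: 'a::complex_inner \<Rightarrow> 'a \<Rightarrow> complex)"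
  unfolding bounded_bilinear_def
  by (auto simp: cinner_add_left cinner_add_right cinner_scaleR_left cinner_scaleR_right
      scaleR_conv_of_real intro!: exI[of _ 1] norm_cinner_le)

lemma bounded_bilinear_scaleC: "bounded_bilinear (scaleC :: complex \<Rightarrow> 'a::complex_inner \<Rightarrow> 'a)"
  unfolding bounded_bilinear_def
  by (auto simp: scaleC_add_left scaleC_add_right scaleC_scaleC scaleR_scaleC norm_scaleC
      scaleR_conv_of_real mult.commute[of _ "complex_of_real _"] intro!: exI[of _ 1])

lemmas bounded_linear_cinner_left = bounded_bilinear.bounded_linear_left[OF bounded_bilinear_cinner]
lemmas bounded_linear_cinner_right = bounded_bilinear.bounded_linear_right[OF bounded_bilinear_cinner]

lemma continuous_on_scaleC [continuous_intros]:
  fixes H :: "_ \<Rightarrow> 'a::complex_inner"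
  shows "continuous_on S g \<Longrightarrow> continuous_on S H \<Longrightarrow> continuous_on S (\<lambda>t. g t *\<^sub>C H t)"
  by (rule bounded_bilinear.continuous_on[OF bounded_bilinear_scaleC])

lemma continuous_on_cinner [continuous_intros]:
  fixes H G :: "_ \<Rightarrow> 'a::complex_inner"
  shows "continuous_on S G \<Longrightarrow> continuous_on S H \<Longrightarrow> continuous_on S (\<lambda>t. cinner (G t) (H t))"
  by (rule bounded_bilinear.continuous_on[OF bounded_bilinear_cinner])

lemma clinear_scaleR: "clinear f \<Longrightarrow> f (r *\<^sub>R x) = r *\<^sub>R f x"
  unfolding clinear_def scaleR_scaleC by blast

lemma bounded_clinear_imp_bounded_linear:
  assumes "bounded_clinear f" shows "bounded_linear f"
proof -
  from assms obtain K where lin: "clinear f" and K: "\<And>x. norm (f x) \<le> norm x * K"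
    unfolding bounded_clinear_def by blast
  show ?thesis
  proof (rule bounded_linear_intro)
    show "f (x + y) = f x + f y" for x y using lin unfolding clinear_def by blast
  qed (use lin clinear_scaleR K in auto)
qed

lemma clinear_funpow:
  fixes f :: "'a::complex_vector \<Rightarrow> 'a"
  shows "clinear f \<Longrightarrow> clinear (f ^^ n)"
  by (induction n) (simp_all add: clinear_def)

section \<open>Orthonormal sequences\<close>

definition orthonormal_seq :: "(nat \<Rightarrow> 'a::complex_inner) \<Rightarrow> bool" where
  "orthonormal_seq e \<longleftrightarrow> (\<forall>j k. cinner (e j) (e k) = (if j = k then 1 else 0))"

lemma cinner_partial_expansion:
  assumes "orthonormal_seq e"
  shows "cinner (e i) (\<Sum>j<m. cinner (e j) v *\<^sub>C e j) = (if i < m then cinner (e i) v else 0)"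
proof -
  have "cinner (e i) (\<Sum>j<m. cinner (e j) v *\<^sub>C e j) = (\<Sum>j<m. cinner (e j) v * cinner (e i) (e j))"
    by (simp add: cinner_sum_right cinner_scaleC_right)
  also have "\<dots> = (\<Sum>j<m. (if i = j then cinner (e j) v else 0))"
    using assms by (intro sum.cong) (simp_all add: orthonormal_seq_def)
  finally show ?thesis by (simp add: sum.delta)
qed

lemma partial_expansion_residual:
  fixes e :: "nat \<Rightarrow> 'a::complex_inner" and v :: 'a and m :: nat
  assumes "orthonormal_seq e"
  defines "p \<equiv> \<Sum>j<m. cinner (e j) v *\<^sub>C e j"
  shows "(norm (v - p))\<^sup>2 = (norm v)\<^sup>2 - (\<Sum>j<m. (cmod (cinner (e j) v))\<^sup>2)"
    and "\<And>i. i < m \<Longrightarrow> cinner (e i) (v - p) = 0"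
    and "cinner p (v - p) = 0"
proof -
  define S where "S = (\<Sum>j<m. (cmod (cinner (e j) v))\<^sup>2)"
  have ep: "cinner (e i) p = (if i < m then cinner (e i) v else 0)" for i
    unfolding p_def by (rule cinner_partial_expansion[OF assms(1)])
  have pv: "cinner p v = complex_of_real S"
    by (simp add: p_def S_def cinner_sum_left cinner_scaleC_left cnj_mult_self)
  have pp: "cinner p p = complex_of_real S"
  proof -
    have "cinner p p = (\<Sum>j<m. cnj (cinner (e j) v) * cinner (e j) p)"
      by (simp add: p_def cinner_sum_left cinner_scaleC_left)
    also have "\<dots> = (\<Sum>j<m. complex_of_real ((cmod (cinner (e j) v))\<^sup>2))"
      by (intro sum.cong) (simp_all add: ep cnj_mult_self)
    finally show ?thesis by (simp add: S_def)
  qed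
  have vp: "cinner v p = complex_of_real S"
    using pv cinner_commute[of v p] by simp
  have "cinner (v - p) (v - p) = cinner v v - complex_of_real S"
    by (simp add: cinner_diff_left cinner_diff_right pv pp vp)
  then show "(norm (v - p))\<^sup>2 = (norm v)\<^sup>2 - S"
    by (simp add: norm_sq_eq_Re_cinner)
  show evp: "cinner (e i) (v - p) = 0" if "i < m" for i
    using that by (simp add: cinner_diff_right ep)
  have "cinner p (v - p) = (\<Sum>j<m. cnj (cinner (e j) v) * cinner (e j) (v - p))"
    by (simp add: p_def cinner_sum_left cinner_scaleC_left)
  also have "\<dots> = 0" by (rule sum.neutral) (simp add: evp)
  finally show "cinner p (v - p) = 0" .
qed

lemma bessel_inequality:
  assumes "orthonormal_seq e"
  shows "(\<Sum>j<m. (cmod (cinner (e j) v))\<^sup>2) \<le> (norm v)\<^sup>2"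
proof -
  have "0 \<le> (norm (v - (\<Sum>j<m. cinner (e j) v *\<^sub>C e j)))\<^sup>2" by simp
  then show ?thesis using partial_expansion_residual(1)[OF assms, where v=v and m=m] by linarith
qed

lemma pythagoras_cinner:
  assumes "cinner a b = 0"
  shows "(norm (a + b::'a::complex_inner))\<^sup>2 = (norm a)\<^sup>2 + (norm b)\<^sup>2"
  using assms cinner_commute[of b a] by (simp add: norm_sq_eq_Re_cinner cinner_add_left cinner_add_right)

lemma parseval_LIMSEQ:
  fixes e :: "nat \<Rightarrow> 'a::complex_inner"
  assumes ortho: "orthonormal_seq e"
    and basis: "closure (cspan (range e)) = UNIV"
  shows "(\<lambda>m. \<Sum>j<m. (cmod (cinner (e j) v))\<^sup>2) \<longlonglongrightarrow> (norm v)\<^sup>2"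
proof (rule LIMSEQ_I)
  fix r :: real assume r: "0 < r"
  have "v \<in> closure (cspan (range e))" using basis by simp
  then obtain u where u: "u \<in> cspan (range e)" and du: "dist u v < sqrt r"
    using r by (meson closure_approachable real_sqrt_gt_0_iff)
  obtain F c where F: "finite F" "F \<subseteq> range e" and uF: "u = (\<Sum>w\<in>F. c w *\<^sub>C w)"
    using u unfolding cspan_def by blast
  obtain C where C: "finite C" "F = e ` C"
    using finite_subset_image[OF F] by blast
  obtain M where M: "C \<subseteq> {..<M}" using finite_nat_bounded[OF C(1)] by blast
  show "\<exists>no. \<forall>m\<ge>no. norm ((\<Sum>j<m. (cmod (cinner (e j) v))\<^sup>2) - (norm v)\<^sup>2) < r"
  proof (intro exI allI impI)
    fix m assume m: "M \<le> m"
    define p where "p = (\<Sum>j<m. cinner (e j) v *\<^sub>C e j)"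
    note res = partial_expansion_residual[OF ortho, where v=v and m=m, folded p_def]
    \<comment> \<open>Once \<open>m \<ge> M\<close>, \<open>u\<close> lies in the span of \<open>e 0, \<dots>, e (m - 1)\<close>, so \<open>p\<close> is at least as close to \<open>v\<close>.\<close>
    have "cinner u (v - p) = (\<Sum>w\<in>F. cnj (c w) * cinner w (v - p))"
      by (simp add: uF cinner_sum_left cinner_scaleC_left)
    also have "\<dots> = 0"
    proof (intro sum.neutral ballI)
      fix w assume "w \<in> F"
      then obtain i where "i \<in> C" "w = e i" using C by blast
      moreover have "i < m" using \<open>i \<in> C\<close> M m by auto
      ultimately show "cnj (c w) * cinner w (v - p) = 0" using res(2) by simp
    qed
    finally have "cinner (p - u) (v - p) = 0"
      by (simp add: cinner_diff_left res(3))
    then have "(norm (v - u))\<^sup>2 = (norm (v - p))\<^sup>2 + (norm (p - u))\<^sup>2"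
      using pythagoras_cinner[of "v - p" "p - u"] cinner_commute[of "v - p" "p - u"] by simp
    moreover have "(norm (v - u))\<^sup>2 < (sqrt r)\<^sup>2"
      using du by (intro power_strict_mono) (simp_all add: dist_norm norm_minus_commute)
    moreover have "(sqrt r)\<^sup>2 = r" using r by simp
    ultimately have "(norm v)\<^sup>2 - (\<Sum>j<m. (cmod (cinner (e j) v))\<^sup>2) < r"
      using res(1) zero_le_power2[of "norm (p - u)"] by linarith
    then show "norm ((\<Sum>j<m. (cmod (cinner (e j) v))\<^sup>2) - (norm v)\<^sup>2) < r"
      using bessel_inequality[OF ortho, where m=m and v=v] by simp
  qed
qed

section \<open>Integrals over the circle and over a period\<close>

lemma scale_measure_eq_density: "scale_measure (ennreal c) M = density M (\<lambda>_. ennreal c)"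
  by (rule measure_eqI) (simp_all add: emeasure_density_const)

lemma integral_restrict_space_atLeastLessThan:
  fixes g :: "real \<Rightarrow> 'b::euclidean_space"
  assumes cont: "continuous_on {a..b} g"
  shows "integrable (restrict_space lborel {a..<b}) g"
    and "integral\<^sup>L (restrict_space lborel {a..<b}) g = integral {a..b} g"
proof -
  have Ico: "{a..<b} \<inter> space lborel \<in> sets lborel" by simp
  have "set_integrable lborel {a..b} g"
    unfolding set_integrable_def by (rule borel_integrable_compact) (simp_all add: cont)
  then have si: "set_integrable lborel {a..<b} g"
    by (rule set_integrable_subset) auto
  then show "integrable (restrict_space lborel {a..<b}) g"
    unfolding integrable_restrict_space[OF Ico] set_integrable_def .
  have "integral\<^sup>L (restrict_space lborel {a..<b}) g = (LINT t:{a..<b}|lborel. g t)"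
    unfolding integral_restrict_space[OF Ico] set_lebesgue_integral_def ..
  also have "\<dots> = integral {a..<b} g"
    by (rule set_borel_integral_eq_integral(2)[OF si])
  also have "\<dots> = integral {a..b} g"
    by (rule integral_subset_negligible)
      (auto intro: negligible_subset[of "{b}"])
  finally show "integral\<^sup>L (restrict_space lborel {a..<b}) g = integral {a..b} g" .
qed

lemma integral_circle_measure:
  fixes f :: "complex \<Rightarrow> 'b::euclidean_space"
  assumes meas: "f \<in> borel_measurable borel"
    and cont: "continuous_on {0..2*pi} (\<lambda>t. f (cis t))"
  shows "integrable circle_measure f"
    and "integral\<^sup>L circle_measure f = (1 / (2 * pi)) *\<^sub>R integral {0..2*pi} (\<lambda>t. f (cis t))"
proof -
  define M where "M = restrict_space lborel {0..<2 * pi}"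
  define D where "D = density M (\<lambda>_. ennreal (1 / (2 * pi)))"
  have circle: "circle_measure = distr D borel cis"
    unfolding circle_measure_def D_def M_def scale_measure_eq_density ..
  have "cis \<in> borel_measurable lborel"
    using borel_measurable_continuous_onI[OF continuous_on_cis[OF continuous_on_id]] by simp
  then have cis_meas: "cis \<in> measurable D borel"
    unfolding D_def M_def by (simp add: measurable_restrict_space1 cong: measurable_cong_sets)
  have fm: "(\<lambda>t. f (cis t)) \<in> borel_measurable M"
    using measurable_comp[OF cis_meas meas] by (simp add: comp_def D_def cong: measurable_cong_sets)
  note M_int = integral_restrict_space_atLeastLessThan[OF cont, folded M_def]
  have "integrable D (\<lambda>t. f (cis t))"
    unfolding D_def using M_int(1) fm by (subst integrable_density) simp_all
  then show "integrable circle_measure f"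
    unfolding circle using integrable_distr_eq[OF cis_meas meas] by simp
  have "integral\<^sup>L circle_measure f = integral\<^sup>L D (\<lambda>t. f (cis t))"
    unfolding circle by (rule integral_distr[OF cis_meas meas])
  also have "\<dots> = integral\<^sup>L M (\<lambda>t. (1 / (2 * pi)) *\<^sub>R f (cis t))"
    unfolding D_def by (rule integral_density) (simp_all add: fm)
  finally show "integral\<^sup>L circle_measure f = (1 / (2 * pi)) *\<^sub>R integral {0..2*pi} (\<lambda>t. f (cis t))"
    by (simp add: M_int(2))
qed

lemma integral_circle_measure_eq_0_if_not_measurable:
  fixes f :: "complex \<Rightarrow> 'b::{banach, second_countable_topology}"
  assumes "f \<notin> borel_measurable borel"
  shows "integral\<^sup>L circle_measure f = 0"
proof -
  have "f \<notin> borel_measurable circle_measure"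
    using assms by (simp add: circle_measure_def cong: measurable_cong_sets)
  then show ?thesis
    using borel_measurable_integrable not_integrable_integral_eq by blast
qed

lemma integral_shift_periodic:
  fixes \<phi> :: "real \<Rightarrow> 'b::banach"
  assumes cont: "continuous_on UNIV \<phi>" and per: "\<And>t. \<phi> (t + p) = \<phi> t"
    and h: "0 \<le> h" "h \<le> p"
  shows "integral {0..p} (\<lambda>t. \<phi> (t + h)) = integral {0..p} \<phi>"
proof -
  have int: "\<phi> integrable_on {a..b}" for a b
    by (rule integrable_continuous_interval) (rule continuous_on_subset[OF cont], simp)
  have "integral {0..p} (\<lambda>t. \<phi> (t + h)) = integral {h..p+h} \<phi>"
    using integral_shift_real_ivl[of h h "p+h" \<phi>] by simp
  also have "\<dots> = integral {h..p} \<phi> + integral {p..p+h} \<phi>"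
    by (rule Henstock_Kurzweil_Integration.integral_combine[symmetric]) (use h in \<open>simp_all add: int\<close>)
  also have "integral {p..p+h} \<phi> = integral {0..h} (\<lambda>x. \<phi> (x + p))"
    using integral_shift_real_ivl[of p p "p+h" \<phi>] by simp
  also have "\<dots> = integral {0..h} \<phi>" by (simp add: per)
  also have "integral {h..p} \<phi> + integral {0..h} \<phi> = integral {0..p} \<phi>"
    using Henstock_Kurzweil_Integration.integral_combine[of 0 h p \<phi>] h int by (simp add: add.commute)
  finally show ?thesis .
qed

lemma square_le_mult_if_quadratic_nonneg:
  fixes A B C :: real
  assumes "0 \<le> A" and q: "\<And>x. 0 \<le> x\<^sup>2 * A - 2 * x * B + C"
  shows "B\<^sup>2 \<le> A * C"
proof (cases "A = 0")
  case True
  have "B = 0"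
  proof (rule ccontr)
    assume "B \<noteq> 0"
    have "0 \<le> ((C + 1) / (2 * B))\<^sup>2 * A - 2 * ((C + 1) / (2 * B)) * B + C" by (rule q)
    also have "\<dots> = -1" using True \<open>B \<noteq> 0\<close> by (simp add: field_simps)
    finally show False by simp
  qed
  then show ?thesis using True by simp
next
  case False
  then have "A > 0" using \<open>0 \<le> A\<close> by simp
  have "0 \<le> (B / A)\<^sup>2 * A - 2 * (B / A) * B + C" by (rule q)
  also have "\<dots> = (A * C - B\<^sup>2) / A" using \<open>A > 0\<close> by (simp add: field_simps power2_eq_square)
  finally show ?thesis using \<open>A > 0\<close> by (simp add: zero_le_divide_iff)
qed

lemma integral_Cauchy_Schwarz:
  fixes f g :: "real \<Rightarrow> real"
  assumes cf: "continuous_on {a..b} f" and cg: "continuous_on {a..b} g"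
  shows "(integral {a..b} (\<lambda>t. f t * g t))\<^sup>2
    \<le> integral {a..b} (\<lambda>t. (f t)\<^sup>2) * integral {a..b} (\<lambda>t. (g t)\<^sup>2)"
proof (rule square_le_mult_if_quadratic_nonneg)
  have int: "h integrable_on {a..b}" if "continuous_on {a..b} h" for h :: "real \<Rightarrow> real"
    using that by (rule integrable_continuous_interval)
  show "0 \<le> integral {a..b} (\<lambda>t. (f t)\<^sup>2)"
    by (intro integral_nonneg int continuous_intros cf) simp
  fix x :: real
  have "0 \<le> integral {a..b} (\<lambda>t. (x * f t - g t)\<^sup>2)"
    by (intro integral_nonneg int continuous_intros cf cg) simp
  also have "\<dots> = integral {a..b} (\<lambda>t. x\<^sup>2 * (f t)\<^sup>2 - 2 * x * (f t * g t) + (g t)\<^sup>2)"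
    by (rule integral_cong) (simp add: power2_eq_square algebra_simps)
  also have "\<dots> = integral {a..b} (\<lambda>t. x\<^sup>2 * (f t)\<^sup>2) - integral {a..b} (\<lambda>t. 2 * x * (f t * g t))
      + integral {a..b} (\<lambda>t. (g t)\<^sup>2)"
    by (simp add: integral_add integral_diff int continuous_intros cf cg)
  finally show "0 \<le> x\<^sup>2 * integral {a..b} (\<lambda>t. (f t)\<^sup>2) - 2 * x * integral {a..b} (\<lambda>t. f t * g t)
      + integral {a..b} (\<lambda>t. (g t)\<^sup>2)"
    by simp
qed

lemma norm_integral_scaleC_le:
  fixes g :: "real \<Rightarrow> complex" and H :: "real \<Rightarrow> 'a::chilbert_space"
  assumes cg: "continuous_on {a..b} g" and cH: "continuous_on {a..b} H"
  shows "(norm (integral {a..b} (\<lambda>t. g t *\<^sub>C H t)))\<^sup>2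
      \<le> integral {a..b} (\<lambda>t. (cmod (g t))\<^sup>2) * integral {a..b} (\<lambda>t. (norm (H t))\<^sup>2)"
proof -
  define w where "w = integral {a..b} (\<lambda>t. g t *\<^sub>C H t)"
  define A where "A = integral {a..b} (\<lambda>t. (cmod (g t))\<^sup>2)"
  define C where "C = integral {a..b} (\<lambda>t. (norm (H t))\<^sup>2)"
  have int: "h integrable_on {a..b}" if "continuous_on {a..b} h" for h :: "real \<Rightarrow> 'b::banach"
    using that by (rule integrable_continuous_interval)
  have A0: "0 \<le> A" and C0: "0 \<le> C"
    unfolding A_def C_def by (intro integral_nonneg int continuous_intros cg cH; simp)+
  \<comment> \<open>Test \<open>w\<close> against itself: \<open>\<parallel>w\<parallel>\<^sup>2 = \<integral> g t \<langle>w, H t\<rangle>\<close>, then Cauchy--Schwarz twice.\<close>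
  have "cinner w w = integral {a..b} ((\<lambda>v. cinner w v) \<circ> (\<lambda>t. g t *\<^sub>C H t))"
    unfolding w_def
    by (intro integral_linear[symmetric] int continuous_intros cg cH bounded_linear_cinner_right)
  also have "\<dots> = integral {a..b} (\<lambda>t. g t * cinner w (H t))"
    by (simp add: comp_def cinner_scaleC_right)
  finally have ww: "cinner w w = integral {a..b} (\<lambda>t. g t * cinner w (H t))" .
  have "(norm w)\<^sup>2 \<le> cmod (cinner w w)"
    by (simp add: norm_sq_eq_Re_cinner complex_Re_le_cmod)
  also have "\<dots> \<le> integral {a..b} (\<lambda>t. norm w * (cmod (g t) * norm (H t)))"
    unfolding ww
  proof (rule integral_norm_bound_integral)
    show "(\<lambda>t. g t * cinner w (H t)) integrable_on {a..b}"
      and "(\<lambda>t. norm w * (cmod (g t) * norm (H t))) integrable_on {a..b}"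
      by (intro int continuous_intros cg cH)+
    fix t
    have "cmod (g t) * cmod (cinner w (H t)) \<le> cmod (g t) * (norm w * norm (H t))"
      by (intro mult_left_mono norm_cinner_le) simp
    then show "norm (g t * cinner w (H t)) \<le> norm w * (cmod (g t) * norm (H t))"
      by (simp add: norm_mult algebra_simps)
  qed
  also have "\<dots> = norm w * integral {a..b} (\<lambda>t. cmod (g t) * norm (H t))" by simp
  also have "\<dots> \<le> norm w * sqrt (A * C)"
  proof (rule mult_left_mono)
    have "(integral {a..b} (\<lambda>t. cmod (g t) * norm (H t)))\<^sup>2 \<le> A * C"
      unfolding A_def C_def by (rule integral_Cauchy_Schwarz) (intro continuous_intros cg cH)+
    then show "integral {a..b} (\<lambda>t. cmod (g t) * norm (H t)) \<le> sqrt (A * C)"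
      using real_le_rsqrt by blast
  qed simp
  finally have "norm w \<le> sqrt (A * C)"
    by (cases "norm w = 0") (simp_all add: A0 C0 power2_eq_square)
  then have "(norm w)\<^sup>2 \<le> A * C"
    using A0 C0 by (metis norm_ge_zero power_mono real_sqrt_pow2 zero_le_mult_iff)
  then show ?thesis by (simp add: w_def A_def C_def)
qed

lemma sum_integral_norm_cinner_sq_le:
  fixes H :: "real \<Rightarrow> 'a::chilbert_space"
  assumes "orthonormal_seq e" and cH: "continuous_on {a..b} H"
  shows "(\<Sum>k<N. integral {a..b} (\<lambda>t. (cmod (cinner (H t) (e k)))\<^sup>2))
    \<le> integral {a..b} (\<lambda>t. (norm (H t))\<^sup>2)"
proof -
  have int: "h integrable_on {a..b}" if "continuous_on {a..b} h" for h :: "real \<Rightarrow> real"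
    using that by (rule integrable_continuous_interval)
  have "(\<Sum>k<N. integral {a..b} (\<lambda>t. (cmod (cinner (H t) (e k)))\<^sup>2))
      = integral {a..b} (\<lambda>t. \<Sum>k<N. (cmod (cinner (e k) (H t)))\<^sup>2)"
    by (subst integral_sum) (simp_all add: int continuous_intros cH cinner_commute[of "H _"])
  also have "\<dots> \<le> integral {a..b} (\<lambda>t. (norm (H t))\<^sup>2)"
    by (intro integral_le int continuous_intros cH bessel_inequality[OF assms(1)])
  finally show ?thesis .
qed

lemma sum_norm_integral_scaleC_le:
  fixes A B :: "real \<Rightarrow> 'a::chilbert_space" and c :: "real \<Rightarrow> complex"
  assumes e: "orthonormal_seq e"
    and cA: "continuous_on {a..b} A" and cB: "continuous_on {a..b} B"
    and cc: "continuous_on {a..b} c" and c1: "\<And>t. cmod (c t) = 1"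
  shows "(\<Sum>k<N. (norm (integral {a..b} (\<lambda>t. (c t * cinner (A t) (e k)) *\<^sub>C B t)))\<^sup>2)
    \<le> integral {a..b} (\<lambda>t. (norm (A t))\<^sup>2) * integral {a..b} (\<lambda>t. (norm (B t))\<^sup>2)"
proof -
  have "(\<Sum>k<N. (norm (integral {a..b} (\<lambda>t. (c t * cinner (A t) (e k)) *\<^sub>C B t)))\<^sup>2)
      \<le> (\<Sum>k<N. integral {a..b} (\<lambda>t. (cmod (cinner (A t) (e k)))\<^sup>2)
          * integral {a..b} (\<lambda>t. (norm (B t))\<^sup>2))"
    using norm_integral_scaleC_le[OF _ cB, where g = "\<lambda>t. c t * cinner (A t) (e _)"]
    by (intro sum_mono) (simp add: norm_mult c1 continuous_intros cA cc)
  also have "\<dots> \<le> integral {a..b} (\<lambda>t. (norm (A t))\<^sup>2) * integral {a..b} (\<lambda>t. (norm (B t))\<^sup>2)"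
    unfolding sum_distrib_right[symmetric]
    by (intro mult_right_mono sum_integral_norm_cinner_sq_le e cA integral_nonneg
        integrable_continuous_interval continuous_intros cB) simp
  finally show ?thesis .
qed

lemma hoelder_imp_continuous_on:
  fixes F :: "real \<Rightarrow> 'b::real_normed_vector"
  assumes hoelder: "\<And>s t. norm (F s - F t) \<le> C * \<bar>s - t\<bar> powr \<alpha>" and "0 < \<alpha>"
  shows "continuous_on S F"
proof (rule continuous_at_imp_continuous_on, intro ballI)
  fix s :: real
  have "((\<lambda>t. \<bar>t - s\<bar> powr \<alpha>) \<longlongrightarrow> 0) (at s)"
  proof (rule tendsto_zero_powrI)
    show "((\<lambda>t. \<bar>t - s\<bar>) \<longlongrightarrow> 0) (at s)"
      by (rule tendsto_eq_intros refl | simp)+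
  qed (use \<open>0 < \<alpha>\<close> in auto)
  then have "((\<lambda>t. C * \<bar>t - s\<bar> powr \<alpha>) \<longlongrightarrow> 0) (at s)"
    by (rule tendsto_mult_right_zero)
  then have "((\<lambda>t. F t - F s) \<longlongrightarrow> 0) (at s)"
    by (rule Lim_null_comparison[rotated]) (intro always_eventually allI hoelder)
  then show "isCont F s"
    by (simp add: isCont_def LIM_zero_cancel)
qed

section \<open>Frequency-modulated frame integrals\<close>

definition twisted_integral :: "nat \<Rightarrow> (real \<Rightarrow> 'a::chilbert_space) \<Rightarrow> 'a \<Rightarrow> 'a" where
  "twisted_integral n F x = integral {0..2*pi} (\<lambda>t. (cis (real n * t) * cinner (F t) x) *\<^sub>C F t)"

lemma funpow_frame_integral_eq_twisted_integral:
  fixes F :: "real \<Rightarrow> 'a::chilbert_space"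
  assumes T: "bounded_clinear T" and cF: "continuous_on {0..2*pi} F"
    and eigen: "\<And>t. T (F t) = cis t *\<^sub>C F t"
  shows "(T ^^ n) (integral {0..2*pi} (\<lambda>t. cinner (F t) x *\<^sub>C F t)) = twisted_integral n F x"
proof (induction n)
  case 0
  show ?case by (simp add: twisted_integral_def)
next
  case (Suc n)
  have lin: "clinear T" using T unfolding bounded_clinear_def by blast
  have "(T ^^ Suc n) (integral {0..2*pi} (\<lambda>t. cinner (F t) x *\<^sub>C F t)) = T (twisted_integral n F x)"
    using Suc by simp
  also have "\<dots> = integral {0..2*pi} (T \<circ> (\<lambda>t. (cis (real n * t) * cinner (F t) x) *\<^sub>C F t))"
    unfolding twisted_integral_def
    by (intro integral_linear[symmetric] integrable_continuous_interval continuous_intros cF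
        bounded_clinear_imp_bounded_linear T)
  also have "\<dots> = twisted_integral (Suc n) F x"
    unfolding twisted_integral_def
  proof (rule integral_cong)
    fix t
    have "T ((cis (real n * t) * cinner (F t) x) *\<^sub>C F t)
        = (cis (real n * t) * cinner (F t) x) *\<^sub>C (cis t *\<^sub>C F t)"
      using lin by (simp add: clinear_def eigen)
    moreover have "cis (real (Suc n) * t) = cis t * cis (real n * t)"
      by (simp add: cis_mult algebra_simps)
    ultimately show "(T \<circ> (\<lambda>t. (cis (real n * t) * cinner (F t) x) *\<^sub>C F t)) t
        = (cis (real (Suc n) * t) * cinner (F t) x) *\<^sub>C F t"
      by (simp add: scaleC_scaleC mult_ac)
  qed
  finally show ?case .
qed

lemma twisted_integral_half_period_shift:
  fixes F :: "real \<Rightarrow> 'a::chilbert_space"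
  assumes cF: "continuous_on UNIV F" and per: "\<And>t. F (t + 2*pi) = F t" and "0 < n"
  defines "h \<equiv> pi / real n"
  shows "2 *\<^sub>R twisted_integral n F x
    = integral {0..2*pi} (\<lambda>t. (cis (real n * t) * cinner (F t - F (t + h)) x) *\<^sub>C F t)
      + integral {0..2*pi} (\<lambda>t. (cis (real n * t) * cinner (F (t + h)) x) *\<^sub>C (F t - F (t + h)))"
proof -
  define \<psi> where "\<psi> t = (cis (real n * t) * cinner (F t) x) *\<^sub>C F t" for t
  have cont: "continuous_on S F" for S using cF continuous_on_subset by blast
  have c\<psi>: "continuous_on S \<psi>" for S unfolding \<psi>_def by (intro continuous_intros cont)
  have int: "g integrable_on {0..2*pi}" if "continuous_on {0..2*pi} g" for g :: "real \<Rightarrow> 'a"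
    using that by (rule integrable_continuous_interval)
  have "cis (real n * (t + 2 * pi)) = cis (real n * t)" for t
    using cis_multiple_2pi[of "real n"] by (simp add: distrib_left cis_mult[symmetric] mult_ac)
  then have per\<psi>: "\<psi> (t + 2 * pi) = \<psi> t" for t
    by (simp add: \<psi>_def per)
  \<comment> \<open>The shift by half a period of \<open>cis (n t)\<close> changes its sign.\<close>
  have "cis (real n * (t + h)) = - cis (real n * t)" for t
    using \<open>0 < n\<close> by (simp add: h_def distrib_left cis_mult[symmetric])
  then have sum\<psi>: "\<psi> t + \<psi> (t + h) = (cis (real n * t) * cinner (F t - F (t + h)) x) *\<^sub>C F t
      + (cis (real n * t) * cinner (F (t + h)) x) *\<^sub>C (F t - F (t + h))" for t
    by (simp add: \<psi>_def cinner_diff_left scaleC_diff_right scaleC_minus_left right_diff_distrib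
        add_diff_eq[symmetric] flip: scaleC_add_left)
  have "h \<le> 2 * pi"
    using \<open>0 < n\<close> pi_gt_zero by (simp add: h_def divide_le_eq)
  then have "integral {0..2*pi} (\<lambda>t. \<psi> (t + h)) = integral {0..2*pi} \<psi>"
    using \<open>0 < n\<close> by (intro integral_shift_periodic c\<psi> per\<psi>) (simp_all add: h_def)
  then have "2 *\<^sub>R integral {0..2*pi} \<psi> = integral {0..2*pi} (\<lambda>t. \<psi> t + \<psi> (t + h))"
    by (subst integral_add) (auto simp: scaleR_2 intro!: int c\<psi> continuous_on_compose2[OF c\<psi>] continuous_intros)
  also have "\<dots> = integral {0..2*pi} (\<lambda>t. (cis (real n * t) * cinner (F t - F (t + h)) x) *\<^sub>C F t)
      + integral {0..2*pi} (\<lambda>t. (cis (real n * t) * cinner (F (t + h)) x) *\<^sub>C (F t - F (t + h)))"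
    unfolding sum\<psi>
    by (intro integral_add int continuous_intros cont continuous_on_compose2[OF cF]) auto
  finally show ?thesis by (simp add: twisted_integral_def \<psi>_def[abs_def])
qed

lemma sum_norm_twisted_integral_le:
  fixes F :: "real \<Rightarrow> 'a::chilbert_space"
  assumes e: "orthonormal_seq e" and cF: "continuous_on UNIV F"
    and per: "\<And>t. F (t + 2*pi) = F t" and "0 < n"
  shows "(\<Sum>k<N. (norm (twisted_integral n F (e k)))\<^sup>2)
    \<le> integral {0..2*pi} (\<lambda>t. (norm (F t))\<^sup>2)
      * integral {0..2*pi} (\<lambda>t. (norm (F t - F (t + pi / real n)))\<^sup>2)"
proof -
  define h where "h = pi / real n"
  define D where "D t = F t - F (t + h)" for t
  define P where "P x = integral {0..2*pi} (\<lambda>t. (cis (real n * t) * cinner (D t) x) *\<^sub>C F t)" for x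
  define Q where "Q x = integral {0..2*pi} (\<lambda>t. (cis (real n * t) * cinner (F (t + h)) x) *\<^sub>C D t)" for x
  define IF where "IF = integral {0..2*pi} (\<lambda>t. (norm (F t))\<^sup>2)"
  define ID where "ID = integral {0..2*pi} (\<lambda>t. (norm (D t))\<^sup>2)"
  have cont: "continuous_on S F" for S using cF continuous_on_subset by blast
  have cFh: "continuous_on S (\<lambda>t. F (t + h))" for S
    by (intro continuous_on_compose2[OF cF] continuous_intros) auto
  have cD: "continuous_on S D" for S unfolding D_def by (intro continuous_intros cont cFh)
  have "h \<le> 2 * pi"
    using \<open>0 < n\<close> pi_gt_zero by (simp add: h_def divide_le_eq)
  then have IFh: "integral {0..2*pi} (\<lambda>t. (norm (F (t + h)))\<^sup>2) = IF"
    unfolding IF_def using \<open>0 < n\<close>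
    by (intro integral_shift_periodic[where \<phi> = "\<lambda>t. (norm (F t))\<^sup>2"] continuous_intros cont)
      (simp_all add: h_def per)
  have "(norm (twisted_integral n F x))\<^sup>2 \<le> ((norm (P x))\<^sup>2 + (norm (Q x))\<^sup>2) / 2" for x
  proof -
    have "2 *\<^sub>R twisted_integral n F x = P x + Q x"
      using twisted_integral_half_period_shift[OF cF per \<open>0 < n\<close>]
      by (simp add: P_def Q_def D_def h_def)
    then have "(2 * norm (twisted_integral n F x))\<^sup>2 \<le> (norm (P x) + norm (Q x))\<^sup>2"
      by (metis abs_of_nonneg norm_ge_zero norm_scaleR norm_triangle_ineq power_mono
          real_norm_def zero_le_numeral)
    moreover have "(norm (P x) + norm (Q x))\<^sup>2 \<le> 2 * ((norm (P x))\<^sup>2 + (norm (Q x))\<^sup>2)"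
      using zero_le_power2[of "norm (P x) - norm (Q x)"] by (simp add: power2_eq_square algebra_simps)
    ultimately show ?thesis by (simp add: power_mult_distrib)
  qed
  then have "(\<Sum>k<N. (norm (twisted_integral n F (e k)))\<^sup>2)
      \<le> ((\<Sum>k<N. (norm (P (e k)))\<^sup>2) + (\<Sum>k<N. (norm (Q (e k)))\<^sup>2)) / 2"
    by (simp add: sum_mono sum.distrib[symmetric] sum_divide_distrib)
  also have "\<dots> \<le> (ID * IF + IF * ID) / 2"
  proof (intro divide_right_mono add_mono)
    show "(\<Sum>k<N. (norm (P (e k)))\<^sup>2) \<le> ID * IF"
      unfolding P_def ID_def IF_def
      by (rule sum_norm_integral_scaleC_le[OF e]) (intro continuous_intros cont cD | simp)+
    show "(\<Sum>k<N. (norm (Q (e k)))\<^sup>2) \<le> IF * ID"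
      unfolding Q_def ID_def IFh[symmetric]
      by (rule sum_norm_integral_scaleC_le[OF e]) (intro continuous_intros cFh cD | simp)+
  qed simp
  finally show ?thesis by (simp add: IF_def ID_def D_def h_def)
qed

lemma integral_norm_sq_diff_shift_le:
  fixes F :: "real \<Rightarrow> 'b::real_normed_vector"
  assumes hoelder: "\<And>s t. norm (F s - F t) \<le> C * \<bar>s - t\<bar> powr \<alpha>" and "0 < \<alpha>"
  shows "integral {0..2*pi} (\<lambda>t. (norm (F t - F (t + h)))\<^sup>2) \<le> 2 * pi * (C * \<bar>h\<bar> powr \<alpha>)\<^sup>2"
proof -
  have cont: "continuous_on S F" for S by (rule hoelder_imp_continuous_on[OF hoelder \<open>0 < \<alpha>\<close>])
  have "integral {0..2*pi} (\<lambda>t. (norm (F t - F (t + h)))\<^sup>2) \<le> integral {0..2*pi} (\<lambda>t. (C * \<bar>h\<bar> powr \<alpha>)\<^sup>2)"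
  proof (rule integral_le)
    show "(\<lambda>t. (norm (F t - F (t + h)))\<^sup>2) integrable_on {0..2*pi}"
      by (intro integrable_continuous_interval continuous_intros cont
          continuous_on_compose2[OF cont[of UNIV]]) auto
    show "(norm (F t - F (t + h)))\<^sup>2 \<le> (C * \<bar>h\<bar> powr \<alpha>)\<^sup>2" for t
      using hoelder[of t "t + h"] by (intro power_mono) simp_all
  qed (rule integrable_const_ivl)
  then show ?thesis by simp
qed

section \<open>The operator defined by the field \<open>E\<close>\<close>

text \<open>
  \<open>E\<close> is arbitrary off the unit circle, so the integrand defining \<open>\<langle>R x, y\<rangle>\<close> need not be Borel
  measurable on \<open>\<complex>\<close>, and then its Bochner integral is \<open>0\<close>. The predicate \<open>kernel_measurable\<close>
  singles out the vectors for which the defining formula means what it says.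
\<close>

locale frame_operator =
  fixes E :: "complex \<Rightarrow> 'a::chilbert_space" and R :: "'a \<Rightarrow> 'a"
  assumes continuous_on_E_cis: "continuous_on UNIV (\<lambda>t. E (cis t))"
    and cinner_R: "\<And>x y. cinner (R x) y =
      integral\<^sup>L circle_measure (\<lambda>l. cinner x (E l) * cnj (cinner y (E l)))"
begin

definition kernel :: "'a \<Rightarrow> 'a \<Rightarrow> complex \<Rightarrow> complex" where
  "kernel x y l = cinner x (E l) * cnj (cinner y (E l))"

definition kernel_measurable :: "'a \<Rightarrow> bool" where
  "kernel_measurable x \<longleftrightarrow> (\<forall>y. kernel x y \<in> borel_measurable borel)"

lemma continuous_on_E_cis_on: "continuous_on S (\<lambda>t. E (cis t))"
  using continuous_on_E_cis continuous_on_subset by blast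

lemma cinner_R_eq_kernel: "cinner (R x) y = integral\<^sup>L circle_measure (kernel x y)"
  unfolding cinner_R kernel_def[abs_def] ..

lemma continuous_on_kernel_cis: "continuous_on S (\<lambda>t. kernel x y (cis t))"
  unfolding kernel_def
  by (intro continuous_intros continuous_on_E_cis_on)

lemma integrable_kernel:
  "kernel x y \<in> borel_measurable borel \<Longrightarrow> integrable circle_measure (kernel x y)"
  by (rule integral_circle_measure(1)) (simp_all add: continuous_on_kernel_cis)

lemma R_eq_0_if_not_kernel_measurable:
  assumes "\<not> kernel_measurable x" shows "R x = 0"
proof -
  obtain z where z: "kernel x z \<notin> borel_measurable borel"
    using assms unfolding kernel_measurable_def by blast
  have "cinner (R x) y = 0" for y
  proof (cases "kernel x y \<in> borel_measurable borel")
    case False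
    then show ?thesis unfolding cinner_R_eq_kernel by (rule integral_circle_measure_eq_0_if_not_measurable)
  next
    case True
    have "kernel x (y + z) = (\<lambda>l. kernel x y l + kernel x z l)"
      by (simp add: kernel_def cinner_add_left algebra_simps fun_eq_iff)
    then have "kernel x (y + z) \<notin> borel_measurable borel"
      using z True borel_measurable_diff[of "kernel x (y + z)" borel "kernel x y"] by auto
    then have "cinner (R x) (y + z) = 0" and "cinner (R x) z = 0"
      using z unfolding cinner_R_eq_kernel by (simp_all add: integral_circle_measure_eq_0_if_not_measurable)
    then show ?thesis by (simp add: cinner_add_right)
  qed
  then show ?thesis using cinner_self_eq_zero by blast
qed

lemma kernel_measurable_diff:
  assumes "kernel_measurable x" "kernel_measurable z" shows "kernel_measurable (x - z)"
proof -
  have "kernel (x - z) y = (\<lambda>l. kernel x y l - kernel z y l)" for y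
    by (simp add: kernel_def cinner_diff_left algebra_simps fun_eq_iff)
  then show ?thesis
    using assms unfolding kernel_measurable_def by (simp add: borel_measurable_diff)
qed

lemma cinner_R_self_eq_0_if_not_kernel_measurable:
  assumes x: "\<not> kernel_measurable x" shows "cinner (R g) g = 0"
proof (cases "kernel_measurable g")
  case False
  then show ?thesis by (simp add: R_eq_0_if_not_kernel_measurable)
next
  case True
  \<comment> \<open>\<open>x + g\<close> is not measurable, so \<open>0 = \<langle>R (x + g), g\<rangle> = \<langle>R x, g\<rangle> + \<langle>R g, g\<rangle> = \<langle>R g, g\<rangle>\<close>.\<close>
  then have "\<not> kernel_measurable (x + g)"
    using x kernel_measurable_diff[of "x + g" g] by auto
  then have "0 = integral\<^sup>L circle_measure (kernel (x + g) g)"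
    by (simp add: R_eq_0_if_not_kernel_measurable flip: cinner_R_eq_kernel)
  also have "kernel (x + g) g = (\<lambda>l. kernel x g l + kernel g g l)"
    by (simp add: kernel_def cinner_add_left algebra_simps fun_eq_iff)
  also have "integral\<^sup>L circle_measure \<dots> = cinner (R x) g + cinner (R g) g"
  proof -
    have "kernel x g = (\<lambda>l. cnj (kernel g x l))"
      by (simp add: kernel_def fun_eq_iff)
    then have "integrable circle_measure (kernel x g)"
      using True unfolding kernel_measurable_def by (simp add: integrable_kernel)
    moreover have "integrable circle_measure (kernel g g)"
      using True unfolding kernel_measurable_def by (simp add: integrable_kernel)
    ultimately show ?thesis
      unfolding cinner_R_eq_kernel by (rule Bochner_Integration.integral_add)
  qed
  finally show ?thesis by (simp add: R_eq_0_if_not_kernel_measurable[OF x])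
qed

lemma R_eq_frame_integral:
  assumes "kernel_measurable x"
  shows "R x = (1 / (2 * pi)) *\<^sub>R integral {0..2*pi} (\<lambda>t. cinner (E (cis t)) x *\<^sub>C E (cis t))"
proof (rule cinner_eqI)
  fix y
  have int: "(\<lambda>t. cinner (E (cis t)) x *\<^sub>C E (cis t)) integrable_on {0..2*pi}"
    by (intro integrable_continuous_interval continuous_intros continuous_on_E_cis_on)
  have "cinner (R x) y = (1 / (2 * pi)) *\<^sub>R integral {0..2*pi} (\<lambda>t. kernel x y (cis t))"
    using assms unfolding kernel_measurable_def cinner_R_eq_kernel
    by (intro integral_circle_measure(2) continuous_on_kernel_cis) simp
  also have "integral {0..2*pi} (\<lambda>t. kernel x y (cis t))
      = integral {0..2*pi} ((\<lambda>v. cinner v y) \<circ> (\<lambda>t. cinner (E (cis t)) x *\<^sub>C E (cis t)))"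
    by (intro integral_cong)
      (simp add: kernel_def cinner_scaleC_left cinner_commute[of x] cinner_commute[of y])
  also have "\<dots> = cinner (integral {0..2*pi} (\<lambda>t. cinner (E (cis t)) x *\<^sub>C E (cis t))) y"
    by (rule integral_linear[OF int bounded_linear_cinner_left])
  finally show "cinner (R x) y
      = cinner ((1 / (2 * pi)) *\<^sub>R integral {0..2*pi} (\<lambda>t. cinner (E (cis t)) x *\<^sub>C E (cis t))) y"
    by (simp add: cinner_scaleR_left scaleR_conv_of_real)
qed

lemma integral_norm_sq_E:
  fixes e :: "nat \<Rightarrow> 'a"
  assumes e: "orthonormal_seq e" and basis: "closure (cspan (range e)) = UNIV"
    and meas: "\<And>k. kernel_measurable (e k)"
  shows "integral\<^sup>L circle_measure (\<lambda>l. (norm (E l))\<^sup>2)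
    = integral {0..2*pi} (\<lambda>t. (norm (E (cis t)))\<^sup>2) / (2 * pi)"
proof -
  \<comment> \<open>By Parseval, \<open>\<parallel>E l\<parallel>\<^sup>2\<close> is a pointwise limit of finite sums of the measurable \<open>kernel (e k) (e k)\<close>.\<close>
  have "(\<lambda>l. (norm (E l))\<^sup>2) \<in> borel_measurable borel"
  proof (rule borel_measurable_LIMSEQ_real)
    show "(\<lambda>m. \<Sum>k<m. Re (kernel (e k) (e k) l)) \<longlonglongrightarrow> (norm (E l))\<^sup>2" for l
      using parseval_LIMSEQ[OF e basis, of "E l"]
      by (simp add: kernel_def complex_norm_square[symmetric] del: of_real_power)
    have [measurable]: "kernel (e k) (e k) \<in> borel_measurable borel" for k
      using meas unfolding kernel_measurable_def by blast
    show "(\<lambda>l. \<Sum>k<m. Re (kernel (e k) (e k) l)) \<in> borel_measurable borel" for m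
      by measurable
  qed
  then show ?thesis
    by (subst integral_circle_measure(2))
      (simp_all add: continuous_intros continuous_on_E_cis_on)
qed

end

context frame_operator
begin

lemma funpow_R_eq_twisted_integral:
  assumes T: "bounded_clinear T" and eigen: "\<forall>l\<in>sphere 0 1. T (E l) = l *\<^sub>C E l"
    and "kernel_measurable x"
  shows "(T ^^ n) (R x) = (1 / (2 * pi)) *\<^sub>R twisted_integral n (\<lambda>t. E (cis t)) x"
proof -
  have "clinear (T ^^ n)"
    using T unfolding bounded_clinear_def by (blast intro: clinear_funpow)
  moreover have "T (E (cis t)) = cis t *\<^sub>C E (cis t)" for t
    using eigen by simp
  ultimately show ?thesis
    by (simp add: R_eq_frame_integral[OF \<open>kernel_measurable x\<close>] clinear_scaleR
        funpow_frame_integral_eq_twisted_integral[OF T continuous_on_E_cis_on])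
qed

lemma sum_sigma_norm_funpow_le:
  assumes T: "bounded_clinear T" and eigen: "\<forall>l\<in>sphere 0 1. T (E l) = l *\<^sub>C E l"
    and e: "orthonormal_seq e" and Re: "\<And>k. R (e k) = complex_of_real (2 * (\<sigma> k)\<^sup>2) *\<^sub>C e k"
    and meas: "\<And>k. kernel_measurable (e k)" and "0 < n"
  shows "(\<Sum>k<N. (\<sigma> k) ^ 4 * (norm ((T ^^ n) (e k)))\<^sup>2)
    \<le> integral {0..2*pi} (\<lambda>t. (norm (E (cis t)))\<^sup>2)
      * integral {0..2*pi} (\<lambda>t. (norm (E (cis t) - E (cis (t + pi / real n))))\<^sup>2) / (16 * pi\<^sup>2)"
proof -
  have "(\<sigma> k) ^ 4 * (norm ((T ^^ n) (e k)))\<^sup>2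
      = (norm (twisted_integral n (\<lambda>t. E (cis t)) (e k)))\<^sup>2 / (16 * pi\<^sup>2)" for k
  proof -
    have "clinear (T ^^ n)"
      using T unfolding bounded_clinear_def by (blast intro: clinear_funpow)
    then have "complex_of_real (2 * (\<sigma> k)\<^sup>2) *\<^sub>C (T ^^ n) (e k) = (T ^^ n) (R (e k))"
      unfolding Re clinear_def by simp
    also have "\<dots> = (1 / (2 * pi)) *\<^sub>R twisted_integral n (\<lambda>t. E (cis t)) (e k)"
      by (rule funpow_R_eq_twisted_integral[OF T eigen meas])
    finally have "norm (complex_of_real (2 * (\<sigma> k)\<^sup>2) *\<^sub>C (T ^^ n) (e k))
        = norm ((1 / (2 * pi)) *\<^sub>R twisted_integral n (\<lambda>t. E (cis t)) (e k))"
      by (rule arg_cong)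
    then have "2 * (\<sigma> k)\<^sup>2 * norm ((T ^^ n) (e k))
        = norm (twisted_integral n (\<lambda>t. E (cis t)) (e k)) / (2 * pi)"
      by (simp add: norm_scaleC norm_mult norm_power)
    then have "(2 * (\<sigma> k)\<^sup>2 * norm ((T ^^ n) (e k)))\<^sup>2
        = (norm (twisted_integral n (\<lambda>t. E (cis t)) (e k)) / (2 * pi))\<^sup>2"
      by (rule arg_cong)
    then show ?thesis
      by (simp add: power_mult_distrib power_divide field_simps flip: power_mult)
  qed
  moreover have "(\<Sum>k<N. (norm (twisted_integral n (\<lambda>t. E (cis t)) (e k)))\<^sup>2)
      \<le> integral {0..2*pi} (\<lambda>t. (norm (E (cis t)))\<^sup>2)
        * integral {0..2*pi} (\<lambda>t. (norm (E (cis t) - E (cis (t + pi / real n))))\<^sup>2)"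
    using sum_norm_twisted_integral_le[OF e continuous_on_E_cis _ \<open>0 < n\<close>]
    by (simp add: cis_mult[symmetric])
  ultimately show ?thesis
    by (simp add: sum_divide_distrib[symmetric] divide_right_mono)
qed

lemma sum_sigma_norm_funpow_le_hoelder:
  assumes T: "bounded_clinear T" and eigen: "\<forall>l\<in>sphere 0 1. T (E l) = l *\<^sub>C E l"
    and e: "orthonormal_seq e" and basis: "closure (cspan (range e)) = UNIV"
    and Re: "\<And>k. R (e k) = complex_of_real (2 * (\<sigma> k)\<^sup>2) *\<^sub>C e k"
    and meas: "\<And>k. kernel_measurable (e k)"
    and hoelder: "\<And>s t. norm (E (cis s) - E (cis t)) \<le> CE * \<bar>s - t\<bar> powr \<alpha>"
    and "0 < \<alpha>" and "0 < n"
  shows "(\<Sum>k<N. (\<sigma> k) ^ 4 * (norm ((T ^^ n) (e k)))\<^sup>2)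
    \<le> CE\<^sup>2 * pi powr (2 * \<alpha>) / (4 * real n powr (2 * \<alpha>))
      * integral\<^sup>L circle_measure (\<lambda>l. (norm (E l))\<^sup>2)"
proof -
  define IF where "IF = integral {0..2*pi} (\<lambda>t. (norm (E (cis t)))\<^sup>2)"
  have "0 \<le> IF" unfolding IF_def
    by (intro integral_nonneg integrable_continuous_interval continuous_intros continuous_on_E_cis_on) simp
  have IE: "integral\<^sup>L circle_measure (\<lambda>l. (norm (E l))\<^sup>2) = IF / (2 * pi)"
    using integral_norm_sq_E[OF e basis meas] by (simp add: IF_def)
  have h\<alpha>: "(CE * \<bar>pi / real n\<bar> powr \<alpha>)\<^sup>2 = CE\<^sup>2 * (pi powr (2 * \<alpha>) / real n powr (2 * \<alpha>))"
    by (simp add: power_mult_distrib power2_eq_square powr_divide flip: powr_add)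
  have "(\<Sum>k<N. (\<sigma> k) ^ 4 * (norm ((T ^^ n) (e k)))\<^sup>2)
      \<le> IF * integral {0..2*pi} (\<lambda>t. (norm (E (cis t) - E (cis (t + pi / real n))))\<^sup>2) / (16 * pi\<^sup>2)"
    unfolding IF_def by (rule sum_sigma_norm_funpow_le[OF T eigen e Re meas \<open>0 < n\<close>])
  also have "\<dots> \<le> IF * (2 * pi * (CE * \<bar>pi / real n\<bar> powr \<alpha>)\<^sup>2) / (16 * pi\<^sup>2)"
    by (intro divide_right_mono mult_left_mono integral_norm_sq_diff_shift_le hoelder \<open>0 < \<alpha>\<close>
        \<open>0 \<le> IF\<close>) simp
  also have "\<dots> = CE\<^sup>2 * pi powr (2 * \<alpha>) / (4 * real n powr (2 * \<alpha>))
      * integral\<^sup>L circle_measure (\<lambda>l. (norm (E l))\<^sup>2)"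
    unfolding h\<alpha> IE by (simp add: power2_eq_square mult_ac)
  finally show ?thesis .
qed

end

theorem corollary5p10:
  fixes T :: "'a::chilbert_space \<Rightarrow> 'a"
    and E :: "complex \<Rightarrow> 'a"
    and R :: "'a \<Rightarrow> 'a"
    and e :: "nat \<Rightarrow> 'a"
    and \<sigma> :: "nat \<Rightarrow> real"
    and CE \<alpha> :: real
    and n :: nat
  assumes T_bounded: "bounded_clinear T"
    and E_bounded: "\<exists>B. \<forall>l\<in>sphere 0 1. norm (E l) \<le> B"
    and E_eigen: "\<forall>l\<in>sphere 0 1. T (E l) = l *\<^sub>C E l"
    and E_spanning: "\<forall>A \<in> sets circle_measure. A \<subseteq> sphere 0 1 \<longrightarrow>
                        measure circle_measure A = 1 \<longrightarrow> closure (cspan (E ` A)) = UNIV"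
    and \<alpha>_pos: "0 < \<alpha>" and \<alpha>_le1: "\<alpha> \<le> 1"
    and E_hoelder: "\<forall>\<theta> \<theta>'. norm (E (cis \<theta>) - E (cis \<theta>')) \<le> CE * \<bar>\<theta> - \<theta>'\<bar> powr \<alpha>"
    and R_def: "\<forall>x y. cinner (R x) y =
                  integral\<^sup>L circle_measure (\<lambda>l. cinner x (E l) * cnj (cinner y (E l)))"
    and e_orthonormal: "\<forall>j k. cinner (e j) (e k) = (if j = k then 1 else 0)"
    and e_basis: "closure (cspan (range e)) = UNIV"
    and e_eigen: "\<forall>k. R (e k) = complex_of_real (2 * (\<sigma> k)\<^sup>2) *\<^sub>C e k"
    and n_pos: "0 < n"
  shows "summable (\<lambda>k. (\<sigma> k) ^ 4 * (norm ((T ^^ n) (e k)))\<^sup>2)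
         \<and> (\<Sum>k. (\<sigma> k) ^ 4 * (norm ((T ^^ n) (e k)))\<^sup>2)
             \<le> CE\<^sup>2 * pi powr (2 * \<alpha>) / (4 * real n powr (2 * \<alpha>))
                * integral\<^sup>L circle_measure (\<lambda>l. (norm (E l))\<^sup>2)"
proof -
  have hoelder: "\<And>s t. norm (E (cis s) - E (cis t)) \<le> CE * \<bar>s - t\<bar> powr \<alpha>"
    using E_hoelder by blast
  interpret frame_operator E R
    using hoelder_imp_continuous_on[OF hoelder \<alpha>_pos] R_def by unfold_locales blast+
  have e: "orthonormal_seq e" using e_orthonormal by (simp add: orthonormal_seq_def)
  define K where "K = CE\<^sup>2 * pi powr (2 * \<alpha>) / (4 * real n powr (2 * \<alpha>))
    * integral\<^sup>L circle_measure (\<lambda>l. (norm (E l))\<^sup>2)"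
  have partial_sums: "(\<Sum>k<N. (\<sigma> k) ^ 4 * (norm ((T ^^ n) (e k)))\<^sup>2) \<le> K" for N
  proof (cases "\<forall>k. kernel_measurable (e k)")
    case True
    then show ?thesis
      unfolding K_def using e_eigen
      by (intro sum_sigma_norm_funpow_le_hoelder T_bounded E_eigen e e_basis hoelder \<alpha>_pos n_pos) auto
  next
    case False
    then obtain j where "\<not> kernel_measurable (e j)" by blast
    then have "\<sigma> k = 0" for k
      using cinner_R_self_eq_0_if_not_kernel_measurable[of "e j" "e k"] e_eigen e_orthonormal
      by (simp add: cinner_scaleC_left)
    moreover have "0 \<le> K"
      unfolding K_def by (intro mult_nonneg_nonneg divide_nonneg_nonneg integral_nonneg_AE) simp_all
    ultimately show ?thesis by simp
  qed
  have "0 \<le> (\<sigma> k) ^ 4 * (norm ((T ^^ n) (e k)))\<^sup>2" for k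
    by (simp add: zero_le_even_power)
  then have "summable (\<lambda>k. (\<sigma> k) ^ 4 * (norm ((T ^^ n) (e k)))\<^sup>2)"
    using partial_sums by (rule summableI_nonneg_bounded)
  with partial_sums show ?thesis
    unfolding K_def[symmetric] using suminf_le_const by blast
qed

end
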